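(* Let $G=(V,A)$ be a graph with $|e|\ge2$ for all $e\in V$, $\mathfrak n=\mathfrak n(G)$, and $\delta$ a nearly coboundary Lie bialgebra structure on $\mathfrak n$. Write (uniquely) $\delta(v)=\sum_{\alpha\in A}D_\alpha(v)\wedge\alpha+\varphi(v)$ for $v\in W$, with linear maps $D_\alpha:W\to W$ and $\varphi:W\to\Lambda^2\mathfrak z$ (such a form exists since $\delta(W)\subseteq W\wedge\mathfrak z\oplus\Lambda^2\mathfrak z$). Then $D_\alpha D_\beta=D_\beta D_\alpha$ for all $\alpha,\beta\in A$.
   Context: $G=(V,A)$ is a finite simple graph without loops, $V=\{e_1,\dots,e_n\}$ ordered, each edge joining $e_i,e_j$ ($i<j$) oriented from $e_i$ to $e_j$; $|e|$ is the degree. $\mathfrak n(G)$ over a field of characteristic zero has basis $V\cup A$, $[e_i,e_j]=\alpha$ if $\alpha$ goes from $e_i$ to $e_j$, $[e_i,e_j]=0$ if not adjacent, edges central; $\mathfrak z=\mathrm{span}(A)$ (the center), $W=\mathrm{span}(V)$. Lie bialgebra structure: linear $\delta:\mathfrak n\to\Lambda^2\mathfrak n$ with co-Jacobi ($\delta(x_1)\wedge x_2-x_1\wedge\delta(x_2)=0$, Sweedler $\delta(x)=x_1\wedge x_2$) and $\delta[x,y]=[\delta x,y]+[x,\delta y]$. Nearly coboundary means $\delta|_{\mathfrak z}=0$. *)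

theory Defs
  imports Main
begin

text \<open>The graph has vertex set Vs (a finite set of naturals, ordered by the order of nat);
  an edge is a pair (i,j) with i < j, oriented from i to j.  Elements of n(G) are coefficient
  functions supported on the basis; elements of the exterior powers are
  alternating tensors (coefficient functions) supported on the basis.\<close>

datatype bidx = Vx nat | Ed "nat \<times> nat"

definition simple_graph :: "nat set \<Rightarrow> (nat \<times> nat) set \<Rightarrow> bool" where
  "simple_graph Vs E \<longleftrightarrow> finite Vs \<and> (\<forall>(i,j)\<in>E. i \<in> Vs \<and> j \<in> Vs \<and> i < j)"

definition degree :: "(nat \<times> nat) set \<Rightarrow> nat \<Rightarrow> nat" where
  "degree E i = card {j. (i,j) \<in> E \<or> (j,i) \<in> E}"

definition basis :: "nat set \<Rightarrow> (nat \<times> nat) set \<Rightarrow> bidx set" where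
  "basis Vs E = Vx ` Vs \<union> Ed ` E"

definition nG :: "nat set \<Rightarrow> (nat \<times> nat) set \<Rightarrow> (bidx \<Rightarrow> 'k::field) set" where
  "nG Vs E = {x. \<forall>b. b \<notin> basis Vs E \<longrightarrow> x b = 0}"

definition WG :: "nat set \<Rightarrow> (nat \<times> nat) set \<Rightarrow> (bidx \<Rightarrow> 'k::field) set" where
  "WG Vs E = {x \<in> nG Vs E. \<forall>e. x (Ed e) = 0}"

definition ZG :: "nat set \<Rightarrow> (nat \<times> nat) set \<Rightarrow> (bidx \<Rightarrow> 'k::field) set" where
  "ZG Vs E = {x \<in> nG Vs E. \<forall>i. x (Vx i) = 0}"

definition unitv :: "bidx \<Rightarrow> bidx \<Rightarrow> 'k::field" where
  "unitv b = (\<lambda>c. if c = b then 1 else 0)"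

text \<open>Lie bracket: [e_i,e_j] = alpha if alpha goes from e_i to e_j, edges central.\<close>
definition brk :: "(nat \<times> nat) set \<Rightarrow> (bidx \<Rightarrow> 'k::field) \<Rightarrow> (bidx \<Rightarrow> 'k) \<Rightarrow> bidx \<Rightarrow> 'k" where
  "brk E x y = (\<lambda>b. case b of
      Ed (i,j) \<Rightarrow> (if (i,j) \<in> E then x (Vx i) * y (Vx j) - x (Vx j) * y (Vx i) else 0)
    | Vx _ \<Rightarrow> 0)"

text \<open>Lambda^2 n(G): alternating 2-tensors supported on the basis
  (e_a \<and> e_b corresponds to e_a\<otimes>e_b - e_b\<otimes>e_a).\<close>
definition L2 :: "nat set \<Rightarrow> (nat \<times> nat) set \<Rightarrow> (bidx \<Rightarrow> bidx \<Rightarrow> 'k::field) set" where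
  "L2 Vs E = {S. (\<forall>a b. S a b = - S b a) \<and>
                 (\<forall>a b. a \<notin> basis Vs E \<or> b \<notin> basis Vs E \<longrightarrow> S a b = 0)}"

definition L2Z :: "nat set \<Rightarrow> (nat \<times> nat) set \<Rightarrow> (bidx \<Rightarrow> bidx \<Rightarrow> 'k::field) set" where
  "L2Z Vs E = {S \<in> L2 Vs E. \<forall>a b. a \<notin> Ed ` E \<or> b \<notin> Ed ` E \<longrightarrow> S a b = 0}"

definition wedge :: "(bidx \<Rightarrow> 'k::field) \<Rightarrow> (bidx \<Rightarrow> 'k) \<Rightarrow> bidx \<Rightarrow> bidx \<Rightarrow> 'k" where
  "wedge x y = (\<lambda>a b. x a * y b - x b * y a)"

text \<open>Wedge of a 2-vector with a vector, as an alternating 3-tensor.\<close>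
definition wedge3 :: "(bidx \<Rightarrow> bidx \<Rightarrow> 'k::field) \<Rightarrow> (bidx \<Rightarrow> 'k) \<Rightarrow> bidx \<Rightarrow> bidx \<Rightarrow> bidx \<Rightarrow> 'k" where
  "wedge3 S v = (\<lambda>p q r. S p q * v r + S q r * v p + S r p * v q)"

text \<open>Adjoint action of x on Lambda^2: [x, a\<and>b] = [x,a]\<and>b + a\<and>[x,b].\<close>
definition act :: "nat set \<Rightarrow> (nat \<times> nat) set \<Rightarrow> (bidx \<Rightarrow> 'k::field) \<Rightarrow> (bidx \<Rightarrow> bidx \<Rightarrow> 'k)
                    \<Rightarrow> bidx \<Rightarrow> bidx \<Rightarrow> 'k" where
  "act Vs E x S = (\<lambda>p q. \<Sum>c\<in>basis Vs E.
        brk E x (unitv c) p * S c q + brk E x (unitv c) q * S p c)"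

definition lin_vec :: "(bidx \<Rightarrow> 'k::field) set \<Rightarrow> ((bidx \<Rightarrow> 'k) \<Rightarrow> 'c \<Rightarrow> 'k) \<Rightarrow> bool" where
  "lin_vec X f \<longleftrightarrow> (\<forall>x\<in>X. \<forall>y\<in>X. f (\<lambda>b. x b + y b) = (\<lambda>t. f x t + f y t)) \<and>
                     (\<forall>x\<in>X. \<forall>c. f (\<lambda>b. c * x b) = (\<lambda>t. c * f x t))"

text \<open>Co-Jacobi: for delta(x) = x_1 \<and> x_2 (Sweedler), delta(x_1)\<and>x_2 - x_1\<and>delta(x_2) = 0;
  writing delta(x) as an alternating tensor T this is  \<Sum>_{a,b} T(a,b) delta(e_a)\<and>e_b = 0.\<close>
definition lie_bialg :: "nat set \<Rightarrow> (nat \<times> nat) set \<Rightarrow> ((bidx \<Rightarrow> 'k::field) \<Rightarrow> bidx \<Rightarrow> bidx \<Rightarrow> 'k) \<Rightarrow> bool" where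
  "lie_bialg Vs E \<delta> \<longleftrightarrow>
     lin_vec (nG Vs E) (\<lambda>x (a,b). \<delta> x a b) \<and>
     (\<forall>x\<in>nG Vs E. \<delta> x \<in> L2 Vs E) \<and>
     (\<forall>x\<in>nG Vs E. \<forall>p q r.
        (\<Sum>a\<in>basis Vs E. \<Sum>b\<in>basis Vs E. \<delta> x a b * wedge3 (\<delta> (unitv a)) (unitv b) p q r) = 0) \<and>
     (\<forall>x\<in>nG Vs E. \<forall>y\<in>nG Vs E.
        \<delta> (brk E x y) = (\<lambda>p q. act Vs E x (\<delta> y) p q - act Vs E y (\<delta> x) p q))"

definition nearly_coboundary :: "nat set \<Rightarrow> (nat \<times> nat) set \<Rightarrow> ((bidx \<Rightarrow> 'k::field) \<Rightarrow> bidx \<Rightarrow> bidx \<Rightarrow> 'k) \<Rightarrow> bool" where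
  "nearly_coboundary Vs E \<delta> \<longleftrightarrow> (\<forall>z\<in>ZG Vs E. \<delta> z = (\<lambda>a b. 0))"

end

theory Submission
  imports Defs
begin

text \<open>Evaluate the co-Jacobi identity for \<open>\<delta>(v)\<close>, \<open>v \<in> W\<close>, at the triple
  \<open>(e\<^sub>i, \<alpha>, \<beta>)\<close>. Since \<open>\<delta>\<close> vanishes on the centre, only the terms whose Sweedler
  components lie in \<open>W\<close> survive, and as \<open>\<delta>(e\<^sub>j)(e\<^sub>i, \<gamma>) = D\<^sub>\<gamma>(e\<^sub>j)\<^sub>i\<close> they give
  \<open>\<Sum>\<^sub>j (D\<^sub>\<beta> v)\<^sub>j (D\<^sub>\<alpha> e\<^sub>j)\<^sub>i = \<Sum>\<^sub>j (D\<^sub>\<alpha> v)\<^sub>j (D\<^sub>\<beta> e\<^sub>j)\<^sub>i\<close>: the \<open>e\<^sub>i\<close>-coordinates of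
  \<open>D\<^sub>\<alpha> D\<^sub>\<beta> v\<close> and \<open>D\<^sub>\<beta> D\<^sub>\<alpha> v\<close> agree.\<close>

lemma lin_comb_mem:
  assumes zero: "(\<lambda>b. 0) \<in> X"
    and add: "\<And>x y. x \<in> X \<Longrightarrow> y \<in> X \<Longrightarrow> (\<lambda>b. x b + y b) \<in> X"
    and smult: "\<And>x c. x \<in> X \<Longrightarrow> (\<lambda>b. c * x b) \<in> X"
    and "finite S" and "\<forall>j\<in>S. g j \<in> X"
  shows "(\<lambda>b. \<Sum>j\<in>S. c j * g j b) \<in> X"
  using \<open>finite S\<close> \<open>\<forall>j\<in>S. g j \<in> X\<close>
proof (induction S rule: finite_induct)
  case empty
  then show ?case using zero by simp
next
  case (insert a S)
  then have "(\<lambda>b. (\<lambda>b. c a * g a b) b + (\<lambda>b. \<Sum>j\<in>S. c j * g j b) b) \<in> X"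
    using add smult by simp
  then show ?case using insert by simp
qed

lemma lin_vec_sum:
  assumes lin: "lin_vec X f"
    and zero: "(\<lambda>b. 0) \<in> X"
    and add: "\<And>x y. x \<in> X \<Longrightarrow> y \<in> X \<Longrightarrow> (\<lambda>b. x b + y b) \<in> X"
    and smult: "\<And>x c. x \<in> X \<Longrightarrow> (\<lambda>b. c * x b) \<in> X"
    and "finite S" and "\<forall>j\<in>S. g j \<in> X"
  shows "f (\<lambda>b. \<Sum>j\<in>S. c j * g j b) = (\<lambda>t. \<Sum>j\<in>S. c j * f (g j) t)"
  using \<open>finite S\<close> \<open>\<forall>j\<in>S. g j \<in> X\<close>
proof (induction S rule: finite_induct)
  case empty
  have "\<forall>x\<in>X. \<forall>c. f (\<lambda>b. c * x b) = (\<lambda>t. c * f x t)"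
    using lin unfolding lin_vec_def by blast
  from this[rule_format, OF zero, of 0] show ?case by simp
next
  case (insert a S)
  have ga: "g a \<in> X" and gS: "\<forall>j\<in>S. g j \<in> X" using insert.prems by auto
  have sa: "(\<lambda>b. c a * g a b) \<in> X" using smult ga .
  have sS: "(\<lambda>b. \<Sum>j\<in>S. c j * g j b) \<in> X" using lin_comb_mem[OF zero add smult insert.hyps(1) gS] .
  have "f (\<lambda>b. \<Sum>j\<in>insert a S. c j * g j b)
      = f (\<lambda>b. (\<lambda>b. c a * g a b) b + (\<lambda>b. \<Sum>j\<in>S. c j * g j b) b)"
    using insert.hyps by simp
  also have "\<dots> = (\<lambda>t. f (\<lambda>b. c a * g a b) t + f (\<lambda>b. \<Sum>j\<in>S. c j * g j b) t)"
    using conjunct1[OF lin[unfolded lin_vec_def], rule_format, OF sa sS] .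
  also have "f (\<lambda>b. c a * g a b) = (\<lambda>t. c a * f (g a) t)"
    using lin ga unfolding lin_vec_def by blast
  finally show ?case using insert by simp
qed

lemma sum_wedge3_unitv:
  assumes "finite B" "p \<in> B" "q \<in> B" "r \<in> B"
  shows "(\<Sum>b\<in>B. T b * wedge3 S (unitv b) p q r) = T r * S p q + T p * S q r + T q * S r p"
proof -
  have "(\<Sum>b\<in>B. T b * wedge3 S (unitv b) p q r)
      = (\<Sum>b\<in>B. (if b = r then T r * S p q else 0) + (if b = p then T p * S q r else 0)
                + (if b = q then T q * S r p else 0))"
    by (rule sum.cong) (simp_all add: wedge3_def unitv_def distrib_left)
  also have "\<dots> = T r * S p q + T p * S q r + T q * S r p"
    using assms by (simp add: sum.distrib)
  finally show ?thesis .
qed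

lemma simple_graph_finite_edges: "simple_graph Vs E \<Longrightarrow> finite E"
  unfolding simple_graph_def by (rule finite_subset[of E "Vs \<times> Vs"]) auto

lemma sum_basis:
  assumes "finite Vs" "finite E"
  shows "(\<Sum>b\<in>basis Vs E. f b) = (\<Sum>j\<in>Vs. f (Vx j)) + (\<Sum>e\<in>E. f (Ed e))"
proof -
  have "(\<Sum>b\<in>basis Vs E. f b) = (\<Sum>b\<in>Vx ` Vs. f b) + (\<Sum>b\<in>Ed ` E. f b)"
    unfolding basis_def by (rule sum.union_disjoint) (use assms in auto)
  then show ?thesis by (simp add: sum.reindex inj_on_def)
qed

lemma WG_zero: "(\<lambda>b. 0) \<in> WG Vs E"
  and WG_add: "x \<in> WG Vs E \<Longrightarrow> y \<in> WG Vs E \<Longrightarrow> (\<lambda>b. x b + y b) \<in> WG Vs E"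
  and WG_smult: "x \<in> WG Vs E \<Longrightarrow> (\<lambda>b. c * x b) \<in> WG Vs E"
  unfolding WG_def nG_def by auto

lemma WG_edge_coord: "w \<in> WG Vs E \<Longrightarrow> w (Ed e) = 0"
  unfolding WG_def by blast

lemma WG_vertex_coord: "w \<in> WG Vs E \<Longrightarrow> i \<notin> Vs \<Longrightarrow> w (Vx i) = 0"
  unfolding WG_def nG_def basis_def by auto

lemma unitv_vertex_in_WG: "j \<in> Vs \<Longrightarrow> unitv (Vx j) \<in> WG Vs E"
  and unitv_edge_in_ZG: "e \<in> E \<Longrightarrow> unitv (Ed e) \<in> ZG Vs E"
  unfolding WG_def ZG_def nG_def basis_def unitv_def by auto

lemma WG_expansion:
  assumes "finite Vs" and w: "w \<in> WG Vs E"
  shows "w = (\<lambda>b. \<Sum>j\<in>Vs. w (Vx j) * unitv (Vx j) b)"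
proof
  fix b
  show "w b = (\<Sum>j\<in>Vs. w (Vx j) * unitv (Vx j) b)"
  proof (cases b)
    case (Vx i)
    have "(\<Sum>j\<in>Vs. w (Vx j) * unitv (Vx j) b) = (\<Sum>j\<in>Vs. if i = j then w (Vx j) else 0)"
      by (rule sum.cong) (auto simp: unitv_def Vx)
    also have "\<dots> = w (Vx i)"
      using assms WG_vertex_coord[OF w, of i] by simp
    finally show ?thesis using Vx by simp
  next
    case (Ed e)
    then show ?thesis using WG_edge_coord[OF w] by (simp add: unitv_def)
  qed
qed

locale decomposed_nearly_coboundary =
  fixes Vs :: "nat set" and E :: "(nat \<times> nat) set"
    and \<delta> :: "(bidx \<Rightarrow> 'k::field) \<Rightarrow> bidx \<Rightarrow> bidx \<Rightarrow> 'k"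
    and D :: "nat \<times> nat \<Rightarrow> (bidx \<Rightarrow> 'k) \<Rightarrow> bidx \<Rightarrow> 'k"
    and \<phi> :: "(bidx \<Rightarrow> 'k) \<Rightarrow> bidx \<Rightarrow> bidx \<Rightarrow> 'k"
  assumes graph: "simple_graph Vs E"
    and co_jacobi: "\<And>x p q r. x \<in> nG Vs E \<Longrightarrow>
      (\<Sum>a\<in>basis Vs E. \<Sum>b\<in>basis Vs E. \<delta> x a b * wedge3 (\<delta> (unitv a)) (unitv b) p q r) = 0"
    and nearly_coboundary: "nearly_coboundary Vs E \<delta>"
    and D_linear: "\<And>\<gamma>. \<gamma> \<in> E \<Longrightarrow> lin_vec (WG Vs E) (D \<gamma>)"
    and D_WG: "\<And>\<gamma> v. \<gamma> \<in> E \<Longrightarrow> v \<in> WG Vs E \<Longrightarrow> D \<gamma> v \<in> WG Vs E"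
    and \<phi>_L2Z: "\<And>v. v \<in> WG Vs E \<Longrightarrow> \<phi> v \<in> L2Z Vs E"
    and \<delta>_WG: "\<And>v. v \<in> WG Vs E \<Longrightarrow>
      \<delta> v = (\<lambda>a b. (\<Sum>\<alpha>\<in>E. wedge (D \<alpha> v) (unitv (Ed \<alpha>)) a b) + \<phi> v a b)"
begin

lemma finite_vertices: "finite Vs"
  using graph unfolding simple_graph_def by blast

lemma finite_edges: "finite E"
  using simple_graph_finite_edges[OF graph] .

lemma \<delta>_edge: "\<gamma> \<in> E \<Longrightarrow> \<delta> (unitv (Ed \<gamma>)) = (\<lambda>a b. 0)"
  using nearly_coboundary unitv_edge_in_ZG unfolding nearly_coboundary_def by blast

lemma \<phi>_vertex_left: "w \<in> WG Vs E \<Longrightarrow> \<phi> w (Vx j) b = 0"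
  and \<phi>_vertex_right: "w \<in> WG Vs E \<Longrightarrow> \<phi> w a (Vx j) = 0"
  using \<phi>_L2Z unfolding L2Z_def by blast+

lemma \<delta>_vertex_edge:
  assumes w: "w \<in> WG Vs E" and "\<gamma> \<in> E"
  shows "\<delta> w (Vx j) (Ed \<gamma>) = D \<gamma> w (Vx j)"
proof -
  have "\<delta> w (Vx j) (Ed \<gamma>) = (\<Sum>\<alpha>\<in>E. if \<alpha> = \<gamma> then D \<gamma> w (Vx j) else 0)"
    unfolding \<delta>_WG[OF w] using \<phi>_vertex_left[OF w] \<phi>_vertex_right[OF w]
    by (simp, intro sum.cong) (auto simp: wedge_def unitv_def)
  then show ?thesis using assms finite_edges by simp
qed

lemma \<delta>_edge_vertex:
  assumes w: "w \<in> WG Vs E" and "\<gamma> \<in> E"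
  shows "\<delta> w (Ed \<gamma>) (Vx j) = - D \<gamma> w (Vx j)"
proof -
  have "\<delta> w (Ed \<gamma>) (Vx j) = (\<Sum>\<alpha>\<in>E. if \<alpha> = \<gamma> then - D \<gamma> w (Vx j) else 0)"
    unfolding \<delta>_WG[OF w] using \<phi>_vertex_left[OF w] \<phi>_vertex_right[OF w]
    by (simp, intro sum.cong) (auto simp: wedge_def unitv_def WG_edge_coord[OF D_WG[OF _ w]])
  then show ?thesis using assms finite_edges by simp
qed

lemma \<delta>_vertex_vertex: "w \<in> WG Vs E \<Longrightarrow> \<delta> w (Vx j) (Vx i) = 0"
  by (simp add: \<delta>_WG \<phi>_vertex_left wedge_def unitv_def)

lemma co_jacobi_vertex_edge_edge:
  assumes v: "v \<in> WG Vs E" and i: "i \<in> Vs" and \<alpha>: "\<alpha> \<in> E" and \<beta>: "\<beta> \<in> E"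
  shows "(\<Sum>j\<in>Vs. D \<beta> v (Vx j) * D \<alpha> (unitv (Vx j)) (Vx i))
       = (\<Sum>j\<in>Vs. D \<alpha> v (Vx j) * D \<beta> (unitv (Vx j)) (Vx i))"
proof -
  let ?term = "\<lambda>x. \<delta> v x (Ed \<beta>) * \<delta> (unitv x) (Vx i) (Ed \<alpha>)
    + \<delta> v x (Vx i) * \<delta> (unitv x) (Ed \<alpha>) (Ed \<beta>) + \<delta> v x (Ed \<alpha>) * \<delta> (unitv x) (Ed \<beta>) (Vx i)"
  have in_basis: "Vx i \<in> basis Vs E" "Ed \<alpha> \<in> basis Vs E" "Ed \<beta> \<in> basis Vs E"
    using i \<alpha> \<beta> unfolding basis_def by auto
  have finite_basis: "finite (basis Vs E)"
    unfolding basis_def using finite_vertices finite_edges by blast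
  have "0 = (\<Sum>x\<in>basis Vs E. \<Sum>y\<in>basis Vs E.
              \<delta> v x y * wedge3 (\<delta> (unitv x)) (unitv y) (Vx i) (Ed \<alpha>) (Ed \<beta>))"
    using co_jacobi v unfolding WG_def by auto
  also have "\<dots> = (\<Sum>x\<in>basis Vs E. ?term x)"
    by (rule sum.cong[OF refl], rule sum_wedge3_unitv[OF finite_basis in_basis])
  also have "\<dots> = (\<Sum>j\<in>Vs. ?term (Vx j))"
    using finite_vertices finite_edges by (simp add: sum_basis \<delta>_edge)
  also have "\<dots> = (\<Sum>j\<in>Vs. D \<beta> v (Vx j) * D \<alpha> (unitv (Vx j)) (Vx i)
                          - D \<alpha> v (Vx j) * D \<beta> (unitv (Vx j)) (Vx i))"
    using v \<alpha> \<beta>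
    by (intro sum.cong) (simp_all add: unitv_vertex_in_WG \<delta>_vertex_edge \<delta>_edge_vertex \<delta>_vertex_vertex)
  finally show ?thesis by (simp add: sum_subtractf)
qed

lemma D_apply_expansion:
  assumes \<gamma>: "\<gamma> \<in> E" and w: "w \<in> WG Vs E"
  shows "D \<gamma> w = (\<lambda>t. \<Sum>j\<in>Vs. w (Vx j) * D \<gamma> (unitv (Vx j)) t)"
proof -
  have "D \<gamma> (\<lambda>b. \<Sum>j\<in>Vs. w (Vx j) * unitv (Vx j) b)
      = (\<lambda>t. \<Sum>j\<in>Vs. w (Vx j) * D \<gamma> (unitv (Vx j)) t)"
    by (rule lin_vec_sum[where g = "\<lambda>j. unitv (Vx j)" and c = "\<lambda>j. w (Vx j)",
          OF D_linear[OF \<gamma>] WG_zero])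
      (auto intro: WG_add WG_smult finite_vertices unitv_vertex_in_WG)
  then show ?thesis
    using WG_expansion[OF finite_vertices w] by simp
qed

lemma D_commute:
  assumes \<alpha>: "\<alpha> \<in> E" and \<beta>: "\<beta> \<in> E" and v: "v \<in> WG Vs E"
  shows "D \<alpha> (D \<beta> v) = D \<beta> (D \<alpha> v)"
proof
  fix x
  have in_WG: "D \<alpha> (D \<beta> v) \<in> WG Vs E" "D \<beta> (D \<alpha> v) \<in> WG Vs E"
    using D_WG \<alpha> \<beta> v by blast+
  show "D \<alpha> (D \<beta> v) x = D \<beta> (D \<alpha> v) x"
  proof (cases x)
    case (Vx i)
    show ?thesis
    proof (cases "i \<in> Vs")
      case True
      then show ?thesis
        using co_jacobi_vertex_edge_edge[OF v True \<alpha> \<beta>] Vx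
        by (simp add: D_apply_expansion[OF \<alpha> D_WG[OF \<beta> v]] D_apply_expansion[OF \<beta> D_WG[OF \<alpha> v]])
    next
      case False
      then show ?thesis using in_WG Vx by (simp add: WG_vertex_coord)
    qed
  next
    case (Ed e)
    then show ?thesis using in_WG by (simp add: WG_edge_coord)
  qed
qed

end

theorem mainTheorem14:
  fixes Vs :: "nat set" and E :: "(nat \<times> nat) set"
    and \<delta> :: "(bidx \<Rightarrow> 'k::field_char_0) \<Rightarrow> bidx \<Rightarrow> bidx \<Rightarrow> 'k"
    and D :: "nat \<times> nat \<Rightarrow> (bidx \<Rightarrow> 'k) \<Rightarrow> bidx \<Rightarrow> 'k"
    and \<phi> :: "(bidx \<Rightarrow> 'k) \<Rightarrow> bidx \<Rightarrow> bidx \<Rightarrow> 'k"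
  assumes "simple_graph Vs E"
    and "\<forall>i\<in>Vs. degree E i \<ge> 2"
    and "lie_bialg Vs E \<delta>"
    and "nearly_coboundary Vs E \<delta>"
    and "\<forall>\<alpha>\<in>E. lin_vec (WG Vs E) (D \<alpha>) \<and> (\<forall>v\<in>WG Vs E. D \<alpha> v \<in> WG Vs E)"
    and "lin_vec (WG Vs E) (\<lambda>v (a,b). \<phi> v a b)"
    and "\<forall>v\<in>WG Vs E. \<phi> v \<in> L2Z Vs E"
    and "\<forall>v\<in>WG Vs E. \<delta> v =
           (\<lambda>a b. (\<Sum>\<alpha>\<in>E. wedge (D \<alpha> v) (unitv (Ed \<alpha>)) a b) + \<phi> v a b)"
  shows "\<forall>\<alpha>\<in>E. \<forall>\<beta>\<in>E. \<forall>v\<in>WG Vs E. D \<alpha> (D \<beta> v) = D \<beta> (D \<alpha> v)"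
proof -
  interpret decomposed_nearly_coboundary Vs E \<delta> D \<phi>
    using assms(1,3-5,7-8) unfolding lie_bialg_def by unfold_locales blast+
  show ?thesis using D_commute by blast
qed

end
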